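(* Let $C\subset\mathbb{R}^d$ be a convex body and $\mu$ a non-$C$-degenerate measure with $\mu(C)>0$ and $\mu(\mathbb{R}^d)=\infty$. Let $B\subset\mathbb{R}^d$ be a Euclidean ball with $\mu(B)\ge\mu(C)$, and let $C'$ be a homothet of $C$ such that $\mu(C'\cap B)<\mu(C)$ but $C'\not\subset B$. Then $C'\cap B$ can be covered by a finite collection of homothets of $C$, each of $\mu$-measure at most $\mu(C)$, none of which is fully contained in $B$.
   Context: A convex body is a convex compact set with nonempty interior; a homothet of $C$ is $\lambda C+x$ with $\lambda>0$, $x\in\mathbb{R}^d$. Measures are Borel measures on $\mathbb{R}^d$ finite on compact sets; $\mu$ is non-$C$-degenerate if it vanishes on the boundary of every homothet of $C$. *)

theory Defs
  imports "HOL-Analysis.Analysis"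
begin

definition convex_body :: "'a::euclidean_space set \<Rightarrow> bool" where
  "convex_body C \<longleftrightarrow> convex C \<and> compact C \<and> interior C \<noteq> {}"

definition homothet :: "'a::euclidean_space set \<Rightarrow> 'a set \<Rightarrow> bool" where
  "homothet C H \<longleftrightarrow> (\<exists>l::real. \<exists>x. l > 0 \<and> H = (\<lambda>y. l *\<^sub>R y + x) ` C)"

definition locally_finite_borel :: "'a::euclidean_space measure \<Rightarrow> bool" where
  "locally_finite_borel M \<longleftrightarrow> sets M = sets borel \<and>
     (\<forall>K. compact K \<longrightarrow> emeasure M K < \<infinity>)"

definition non_degenerate :: "'a::euclidean_space set \<Rightarrow> 'a measure \<Rightarrow> bool" where
  "non_degenerate C M \<longleftrightarrow> (\<forall>H. homothet C H \<longrightarrow> emeasure M (frontier H) = 0)"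

end

theory Submission
  imports Defs
begin

text \<open>
  By continuity of \<open>\<mu>\<close> from above, enlarging \<open>C'\<close> slightly about an interior point
  gives a homothet \<open>K\<close> of \<open>C\<close> with \<open>C' \<subseteq> interior K\<close> and still \<open>\<mu>(K \<inter> B) < \<mu>(C)\<close>.
  For \<open>x\<close> in \<open>C'\<close> and in the closed ball, shrink \<open>K\<close> towards \<open>x\<close>: at the largest ratio \<open>s\<close> for
  which the shrunken copy stays in the closed ball, its part outside the open ball lies on its
  boundary, which is \<open>\<mu>\<close>-null (for \<open>s = 0\<close> the copy is the point \<open>x\<close>, which lies on the
  boundary of a translate of \<open>C\<close>). So for a ratio slightly above \<open>s\<close> the copy \<open>H\<close> leaves the
  ball while its part outside the open ball has measure below \<open>\<mu>(C) - \<mu>(K \<inter> B)\<close>,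
  whence \<open>\<mu>(H) < \<mu>(C)\<close>; and \<open>x\<close> is interior to \<open>H\<close>. Compactness of \<open>C'\<close> intersected with the closed ball selects finitely many such \<open>H\<close>.
\<close>

definition scale_about :: "'a::real_vector \<Rightarrow> real \<Rightarrow> 'a set \<Rightarrow> 'a set" where
  "scale_about x t K = (\<lambda>y. t *\<^sub>R y + (1 - t) *\<^sub>R x) ` K"

lemma scale_about_1 [simp]: "scale_about x 1 K = K"
  by (simp add: scale_about_def)

lemma scale_about_0: "K \<noteq> {} \<Longrightarrow> scale_about x 0 K = {x}"
  by (auto simp: scale_about_def)

lemma scale_about_scale_about:
  "scale_about x s (scale_about x t K) = scale_about x (s * t) K"
  unfolding scale_about_def image_image by (simp add: algebra_simps)

lemma scale_about_eq_affinity: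
  "scale_about x t K = (\<lambda>y. (1 - t) *\<^sub>R x + t *\<^sub>R y) ` K"
  by (simp add: scale_about_def add.commute)

lemma compact_scale_about: "compact K \<Longrightarrow> compact (scale_about x t K)"
  for K :: "'a::real_normed_vector set"
  unfolding scale_about_eq_affinity by (rule compact_affinity)

lemma convex_scale_about: "convex K \<Longrightarrow> convex (scale_about x t K)"
  unfolding scale_about_eq_affinity by (rule convex_affinity)

lemma interior_scale_about:
  fixes K :: "'a::euclidean_space set"
  assumes "t \<noteq> 0"
  shows "interior (scale_about x t K) = scale_about x t (interior K)"
proof -
  have "scale_about x t S = (+) ((1 - t) *\<^sub>R x) ` (*\<^sub>R) t ` S" for S
    by (auto simp: scale_about_eq_affinity)
  moreover have "interior ((*\<^sub>R) t ` K) = (*\<^sub>R) t ` interior K"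
    using assms by (intro interior_injective_linear_image) (auto simp: inj_on_def)
  ultimately show ?thesis
    by (simp add: interior_translation)
qed

lemma scale_about_subset:
  assumes "convex K" "x \<in> K" "0 \<le> t" "t \<le> 1"
  shows "scale_about x t K \<subseteq> K"
  using assms by (auto simp: scale_about_def intro: convexD)

lemma scale_about_mono:
  assumes "convex K" "x \<in> K" "0 \<le> s" "s \<le> t"
  shows "scale_about x s K \<subseteq> scale_about x t K"
proof (cases "t = 0")
  case True
  then show ?thesis using assms by simp
next
  case False
  then have "scale_about x s K = scale_about x t (scale_about x (s / t) K)"
    by (simp add: scale_about_scale_about)
  also have "\<dots> \<subseteq> scale_about x t K"
    unfolding scale_about_def[of x t]
    using assms False by (intro image_mono scale_about_subset) auto
  finally show ?thesis .
qed

lemma subset_interior_scale_about: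
  fixes K :: "'a::euclidean_space set"
  assumes "convex K" "x \<in> interior K" "1 < t"
  shows "K \<subseteq> interior (scale_about x t K)"
proof -
  have "scale_about x (1 / t) K \<subseteq> interior K"
  proof
    fix z assume "z \<in> scale_about x (1 / t) K"
    then obtain y where "y \<in> K" "z = y - (1 - 1 / t) *\<^sub>R (y - x)"
      by (auto simp: scale_about_def algebra_simps)
    then show "z \<in> interior K"
      using assms by (auto intro: mem_interior_convex_shrink)
  qed
  then have "scale_about x t (scale_about x (1 / t) K) \<subseteq> scale_about x t (interior K)"
    by (auto simp: scale_about_def)
  then show ?thesis
    using assms(3) by (simp add: scale_about_scale_about interior_scale_about)
qed

lemma homothet_scale_about:
  assumes "homothet C K" "0 < t"
  shows "homothet C (scale_about x t K)"
proof -
  obtain l v where "0 < l" "K = (\<lambda>y. l *\<^sub>R y + v) ` C"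
    using assms(1) by (auto simp: homothet_def)
  then have "scale_about x t K = (\<lambda>y. (t * l) *\<^sub>R y + (t *\<^sub>R v + (1 - t) *\<^sub>R x)) ` C"
    by (simp add: scale_about_def image_image algebra_simps)
  then show ?thesis
    using \<open>0 < l\<close> assms(2) unfolding homothet_def by (metis mult_pos_pos)
qed

lemma convex_body_homothet:
  assumes "convex_body C" "homothet C H"
  shows "convex_body H"
proof -
  obtain l v where "0 < l" and H: "H = scale_about 0 l ((+) (v /\<^sub>R l) ` C)"
    using assms(2) by (auto simp: homothet_def scale_about_def image_image algebra_simps)
  have "convex_body ((+) (v /\<^sub>R l) ` C)"
    using assms(1) by (auto simp: convex_body_def interior_translation compact_translation convex_translation)
  then show ?thesis
    using \<open>0 < l\<close> unfolding H convex_body_def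
    by (simp add: interior_scale_about compact_scale_about convex_scale_about)
      (simp add: scale_about_def)
qed

lemma Inter_scale_about_subset:
  fixes K :: "'a::euclidean_space set"
  assumes "compact K" "t \<longlonglongrightarrow> s"
  shows "(\<Inter>n. scale_about x (t n) K) \<subseteq> scale_about x s K"
proof
  fix y assume y: "y \<in> (\<Inter>n. scale_about x (t n) K)"
  define G where "G = (\<lambda>(u, k). (u, u *\<^sub>R k + (1 - u) *\<^sub>R x)) ` (insert s (range t) \<times> K)"
  have "compact G"
    unfolding G_def using assms compact_sequence_with_limit
    by (intro compact_continuous_image compact_Times) (auto intro!: continuous_intros simp: case_prod_unfold)
  moreover have "(t n, y) \<in> G" for n
    using y by (force simp: G_def scale_about_def)
  moreover have "(\<lambda>n. (t n, y)) \<longlonglongrightarrow> (s, y)"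
    using assms(2) by (intro tendsto_intros)
  ultimately have "(s, y) \<in> G"
    using compact_imp_closed closed_sequentially by metis
  then show "y \<in> scale_about x s K"
    by (auto simp: G_def scale_about_def)
qed

lemma non_degenerate_emeasure_singleton:
  assumes "convex_body C" "non_degenerate C M" "sets M = sets borel"
  shows "emeasure M {x} = 0"
proof -
  have "C \<noteq> {}" "C \<noteq> UNIV"
    using assms(1) not_bounded_UNIV by (auto simp: convex_body_def compact_imp_bounded)
  then obtain p where p: "p \<in> frontier C"
    using frontier_not_empty by blast
  define H where "H = (+) (x - p) ` C"
  have "homothet C H"
    unfolding homothet_def H_def
    by (intro exI[of _ 1] exI[of _ "x - p"]) (simp add: add.commute[of _ "x - p"])
  then have "emeasure M (frontier H) = 0"
    using assms(2) by (simp add: non_degenerate_def)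
  moreover have "x \<in> frontier H"
    using p by (force simp: H_def frontier_translation)
  ultimately show ?thesis
    using assms(3) emeasure_mono[of "{x}" "frontier H" M] by simp
qed

lemma emeasure_frontier_scale_about_eq_0:
  assumes "convex_body C" "non_degenerate C M" "sets M = sets borel" "homothet C K" "0 \<le> t"
  shows "emeasure M (frontier (scale_about x t K)) = 0"
proof (cases "t = 0")
  case True
  have "K \<noteq> {}"
    using convex_body_homothet[OF assms(1,4)] by (auto simp: convex_body_def)
  then show ?thesis
    using True non_degenerate_emeasure_singleton[OF assms(1-3)] by (simp add: scale_about_0 frontier_def)
next
  case False
  then have "homothet C (scale_about x t K)"
    using assms(4,5) by (simp add: homothet_scale_about)
  then show ?thesis
    using assms(2) by (simp add: non_degenerate_def)
qed

lemma emeasure_scale_about_Int_less_right: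
  fixes K :: "'a::euclidean_space set"
  assumes M: "locally_finite_borel M" and K: "compact K" "convex K" "x \<in> K"
    and "E \<in> sets M" "0 \<le> s" "s < t" "emeasure M (scale_about x s K \<inter> E) < a"
  shows "\<exists>u. s < u \<and> u \<le> t \<and> emeasure M (scale_about x u K \<inter> E) < a"
proof -
  define u where "u n = s + (t - s) / Suc n" for n
  define A where "A n = scale_about x (u n) K \<inter> E" for n
  have u: "s < u n" "u n \<le> t" "u (Suc n) \<le> u n" for n
    using \<open>s < t\<close> by (auto simp: u_def field_simps frac_le mult_right_mono)
  have "u \<longlonglongrightarrow> s + 0"
    unfolding u_def by (intro tendsto_intros LIMSEQ_Suc[OF lim_const_over_n])
  then have "(\<Inter>n. A n) \<subseteq> scale_about x s K \<inter> E"
    using Inter_scale_about_subset[OF K(1)] by (auto simp: A_def)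
  have meas: "scale_about x v K \<inter> E \<in> sets M" for v
    using M K(1) \<open>E \<in> sets M\<close>
    by (auto simp: locally_finite_borel_def borel_compact compact_scale_about)
  have fin: "emeasure M (scale_about x v K \<inter> E) \<noteq> \<infinity>" for v
  proof -
    have "emeasure M (scale_about x v K \<inter> E) \<le> emeasure M (scale_about x v K)"
      using M K(1) by (intro emeasure_mono)
        (auto simp: locally_finite_borel_def borel_compact compact_scale_about)
    also have "\<dots> < \<infinity>"
      using M K(1) by (simp add: locally_finite_borel_def compact_scale_about)
    finally show ?thesis by simp
  qed
  have "decseq A"
    unfolding decseq_Suc_iff A_def using u \<open>0 \<le> s\<close> scale_about_mono[OF K(2,3)]
    by (meson Int_mono order.trans less_imp_le order_refl)
  then have "(\<lambda>n. emeasure M (A n)) \<longlonglongrightarrow> emeasure M (\<Inter>n. A n)"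
    using meas fin unfolding A_def by (intro Lim_emeasure_decseq) auto
  moreover have "emeasure M (\<Inter>n. A n) < a"
    using emeasure_mono[OF \<open>(\<Inter>n. A n) \<subseteq> _\<close> meas] assms(8) by simp
  ultimately obtain n where "emeasure M (A n) < a"
    by (metis order_tendstoD(2) eventually_sequentially order_refl)
  then show ?thesis
    using u by (auto simp: A_def)
qed

lemma exists_critical_scale_about:
  fixes K S :: "'a::real_normed_vector set"
  assumes "closed S" "x \<in> K" "x \<in> S" "\<not> K \<subseteq> S"
  obtains s where "0 \<le> s" "s < 1" "scale_about x s K \<subseteq> S"
    "\<And>t. s < t \<Longrightarrow> t \<le> 1 \<Longrightarrow> \<not> scale_about x t K \<subseteq> S"
proof -
  define T where "T = {t \<in> {0..1}. scale_about x t K \<subseteq> S}"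
  have "T = {0..1} \<inter> (\<Inter>y\<in>K. (\<lambda>t. t *\<^sub>R y + (1 - t) *\<^sub>R x) -` S)"
    by (auto simp: T_def scale_about_def)
  moreover have "closed ((\<lambda>t. t *\<^sub>R y + (1 - t) *\<^sub>R x) -` S)" for y
    using \<open>closed S\<close> by (intro continuous_closed_vimage) (auto intro!: continuous_intros)
  ultimately have "closed T"
    by (simp add: closed_Int closed_INT)
  moreover have "0 \<in> T"
    using assms(2,3) by (auto simp: T_def scale_about_def)
  moreover have "bdd_above T"
    by (auto simp: T_def bdd_above_def)
  ultimately have "Sup T \<in> T"
    using closed_contains_Sup by blast
  then have "0 \<le> Sup T" "Sup T \<le> 1" "scale_about x (Sup T) K \<subseteq> S"
    by (simp_all add: T_def)
  moreover have "Sup T \<noteq> 1"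
    using \<open>scale_about x (Sup T) K \<subseteq> S\<close> assms(4) by auto
  moreover have "\<not> scale_about x t K \<subseteq> S" if "Sup T < t" "t \<le> 1" for t
    using that cSup_upper[OF _ \<open>bdd_above T\<close>, of t] \<open>0 \<le> Sup T\<close> by (force simp: T_def)
  ultimately show ?thesis
    using that by simp
qed

lemma exists_scale_about_not_subset_cball:
  fixes K :: "'a::euclidean_space set"
  assumes C: "convex_body C" "locally_finite_borel M" "non_degenerate C M"
    and K: "homothet C K" "x \<in> K" "x \<in> cball c r" "\<not> K \<subseteq> cball c r"
    and "0 < \<delta>"
  shows "\<exists>t. 0 < t \<and> t \<le> 1 \<and> \<not> scale_about x t K \<subseteq> cball c r \<and>
           emeasure M (scale_about x t K - ball c r) < \<delta>"
proof -
  have "compact K" "convex K"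
    using convex_body_homothet[OF C(1) K(1)] by (auto simp: convex_body_def)
  have sets: "sets M = sets borel"
    using C(2) by (simp add: locally_finite_borel_def)
  obtain s where s: "0 \<le> s" "s < 1" "scale_about x s K \<subseteq> cball c r"
    and beyond: "\<And>t. s < t \<Longrightarrow> t \<le> 1 \<Longrightarrow> \<not> scale_about x t K \<subseteq> cball c r"
    using exists_critical_scale_about[OF closed_cball K(2-4)] by blast
  have "interior (scale_about x s K) \<subseteq> ball c r"
    using interior_mono[OF s(3)] by simp
  moreover have "closed (scale_about x s K)"
    by (simp add: compact_imp_closed compact_scale_about \<open>compact K\<close>)
  ultimately have "scale_about x s K \<inter> - ball c r \<subseteq> frontier (scale_about x s K)"
    by (auto simp: frontier_def)
  then have "emeasure M (scale_about x s K \<inter> - ball c r) \<le> emeasure M (frontier (scale_about x s K))"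
    by (rule emeasure_mono) (simp add: sets borel_closed)
  also have "\<dots> = 0"
    using emeasure_frontier_scale_about_eq_0[OF C(1,3) sets K(1) s(1)] .
  finally have "emeasure M (scale_about x s K \<inter> - ball c r) < \<delta>"
    using \<open>0 < \<delta>\<close> by simp
  moreover have "- ball c r \<in> sets M"
    by (simp add: sets borel_comp)
  ultimately obtain t where t: "s < t" "t \<le> 1" "emeasure M (scale_about x t K \<inter> - ball c r) < \<delta>"
    using emeasure_scale_about_Int_less_right[OF C(2) \<open>compact K\<close> \<open>convex K\<close> K(2)] s(1,2)
    by blast
  then show ?thesis
    using s(1) beyond[OF t(1,2)] by (intro exI[of _ t]) (simp add: Diff_eq)
qed

lemma exists_homothet_nbhd_not_subset:
  fixes B :: "'a::euclidean_space set"
  assumes C: "convex_body C" "locally_finite_borel M" "non_degenerate C M"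
    and B: "ball c r \<subseteq> B" "B \<subseteq> cball c r" "B \<in> sets M"
    and K: "homothet C K" "x \<in> interior K" "x \<in> cball c r" "\<not> K \<subseteq> cball c r"
    and "emeasure M (K \<inter> B) < a"
  shows "\<exists>H. (homothet C H \<and> emeasure M H < a \<and> \<not> H \<subseteq> B) \<and> x \<in> interior H"
proof -
  have "compact K" "convex K" "x \<in> K"
    using convex_body_homothet[OF C(1) K(1)] K(2) interior_subset by (auto simp: convex_body_def)
  have sets: "sets M = sets borel"
    using C(2) by (simp add: locally_finite_borel_def)
  define \<delta> where "\<delta> = a - emeasure M (K \<inter> B)"
  have "0 < \<delta>"
    unfolding \<delta>_def using \<open>emeasure M (K \<inter> B) < a\<close> by (rule diff_gr0_ennreal)
  then obtain t where t: "0 < t" "t \<le> 1" "\<not> scale_about x t K \<subseteq> cball c r"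
      "emeasure M (scale_about x t K - ball c r) < \<delta>"
    using exists_scale_about_not_subset_cball[OF C K(1) \<open>x \<in> K\<close> K(3,4)] by blast
  define H where "H = scale_about x t K"
  have "x \<in> scale_about x t (interior K)"
    using K(2) by (force simp: scale_about_def algebra_simps)
  then have "x \<in> interior H"
    using t(1) by (simp add: H_def interior_scale_about)
  have "H \<subseteq> K"
    using scale_about_subset[OF \<open>convex K\<close> \<open>x \<in> K\<close>] t by (simp add: H_def)
  have meas: "H \<in> sets M" "K \<in> sets M"
    using \<open>compact K\<close> by (auto simp: H_def sets borel_compact compact_scale_about)
  have "emeasure M H \<le> emeasure M ((H \<inter> B) \<union> (H - ball c r))"
    using meas B by (intro emeasure_mono) (auto simp: sets)
  also have "\<dots> \<le> emeasure M (H \<inter> B) + emeasure M (H - ball c r)"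
    using meas B by (intro emeasure_subadditive) (auto simp: sets)
  also have "\<dots> \<le> emeasure M (K \<inter> B) + emeasure M (H - ball c r)"
    using meas B \<open>H \<subseteq> K\<close> by (intro add_right_mono emeasure_mono) auto
  also have "\<dots> < emeasure M (K \<inter> B) + \<delta>"
  proof -
    have "emeasure M (K \<inter> B) < top"
      using \<open>emeasure M (K \<inter> B) < a\<close> top_greatest by (rule order.strict_trans2)
    then show ?thesis
      using t(4) by (simp add: H_def ennreal_add_left_cancel_less)
  qed
  also have "\<dots> = a"
    unfolding \<delta>_def using \<open>emeasure M (K \<inter> B) < a\<close> by (intro add_diff_inverse_ennreal) simp
  finally show ?thesis
    using \<open>x \<in> interior H\<close> t(3) B(2) homothet_scale_about[OF K(1) t(1)]
    by (auto simp: H_def)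
qed

lemma exists_homothet_enlargement:
  assumes "convex_body C" "locally_finite_borel M" "homothet C C'" "E \<in> sets M"
    and "emeasure M (C' \<inter> E) < a"
  shows "\<exists>K. homothet C K \<and> C' \<subseteq> interior K \<and> emeasure M (K \<inter> E) < a"
proof -
  have C': "compact C'" "convex C'" "interior C' \<noteq> {}"
    using convex_body_homothet[OF assms(1,3)] by (auto simp: convex_body_def)
  then obtain p where "p \<in> interior C'"
    by auto
  moreover obtain u where "1 < u" "emeasure M (scale_about p u C' \<inter> E) < a"
    using emeasure_scale_about_Int_less_right[OF assms(2) C'(1,2), of p E 1 2 a]
      \<open>p \<in> interior C'\<close> interior_subset assms(4,5) by auto
  ultimately show ?thesis
    using homothet_scale_about[OF assms(3)] subset_interior_scale_about[OF C'(2)]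
    by (metis less_trans zero_less_one)
qed

lemma compact_finite_cover_by_interiors:
  assumes "compact S" "\<forall>x\<in>S. \<exists>H. P H \<and> x \<in> interior H"
  shows "\<exists>F. finite F \<and> S \<subseteq> \<Union>F \<and> (\<forall>H\<in>F. P H)"
proof -
  obtain h where h: "\<And>x. x \<in> S \<Longrightarrow> P (h x) \<and> x \<in> interior (h x)"
    using assms(2) by metis
  obtain T where "finite T" "S \<subseteq> (\<Union>x\<in>T. interior (h x))" "T \<subseteq> S"
    by (rule compactE_image[OF assms(1), of S "\<lambda>x. interior (h x)"]) (use h in auto)
  then show ?thesis
    using h interior_subset by (intro exI[of _ "h ` T"]) blast
qed
theorem mainTheorem16:
  fixes C C' B :: "'a::euclidean_space set" and M :: "'a measure"
  assumes "convex_body C"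
    and "locally_finite_borel M"
    and "non_degenerate C M"
    and "emeasure M C > 0"
    and "emeasure M UNIV = \<infinity>"
    and "\<exists>c r. r > 0 \<and> (B = ball c r \<or> B = cball c r)"
    and "emeasure M B \<ge> emeasure M C"
    and "homothet C C'"
    and "emeasure M (C' \<inter> B) < emeasure M C"
    and "\<not> C' \<subseteq> B"
  shows "\<exists>F. finite F \<and> C' \<inter> B \<subseteq> \<Union>F \<and>
           (\<forall>H\<in>F. homothet C H \<and> emeasure M H \<le> emeasure M C \<and> \<not> H \<subseteq> B)"
proof -
  obtain c r where "B = ball c r \<or> B = cball c r"
    using assms(6) by blast
  then have B: "ball c r \<subseteq> B" "B \<subseteq> cball c r" "B \<in> sets M"
    using assms(2) by (auto simp: locally_finite_borel_def)
  obtain K where K: "homothet C K" "C' \<subseteq> interior K" "emeasure M (K \<inter> B) < emeasure M C"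
    using exists_homothet_enlargement[OF assms(1,2,8) B(3) assms(9)] by blast
  have "\<not> K \<subseteq> cball c r"
    using interior_mono[of K "cball c r"] K(2) B(1) assms(10) by auto
  have "compact (C' \<inter> cball c r)"
    using convex_body_homothet[OF assms(1,8)] by (simp add: convex_body_def compact_Int_closed)
  moreover have "\<forall>x\<in>C' \<inter> cball c r.
      \<exists>H. (homothet C H \<and> emeasure M H < emeasure M C \<and> \<not> H \<subseteq> B) \<and> x \<in> interior H"
    using exists_homothet_nbhd_not_subset[OF assms(1-3) B K(1) _ _ \<open>\<not> K \<subseteq> cball c r\<close> K(3)] K(2)
    by (meson IntD1 IntD2 subsetD)
  ultimately have "\<exists>F. finite F \<and> C' \<inter> cball c r \<subseteq> \<Union>F \<and>
      (\<forall>H\<in>F. homothet C H \<and> emeasure M H < emeasure M C \<and> \<not> H \<subseteq> B)"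
    by (rule compact_finite_cover_by_interiors)
  then show ?thesis
    using B(2) by (meson Int_mono order_refl order.trans less_imp_le)
qed

end
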